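(* For integers $n\ge1$, $s\ge0$, and $0\le r\le 2n$, let $a(n,s,r)$ be the number of binary sequences $(b_1,\dots,b_{(s+2)n+1})$ of length $(s+2)n+1$ such that (i) for every $j\ge1$, if the pattern $10$ occurs at least $j$ times (as consecutive entries $b_i=1,b_{i+1}=0$), then the $j$th such occurrence has its starting index $i\ge (s+2)j+1$; and (ii) the total number of indices $i$ with $b_i\ne b_{i+1}$ (occurrences of $10$ or $01$) is at most $r$. Then \[ a(n,s,r) = 2\binom{(s+2)n-1}{r} - (s-2)\sum_{i=0}^{r-1}\binom{(s+2)n-1}{i}. \]
   Context: Positions in a binary sequence are indexed starting from $1$. Occurrences of $10$ are counted in order of their starting positions. *)

theory Defs
  imports Main
begin

text \<open>A binary sequence (b_1,...,b_L) is a list b of booleans (True = 1, False = 0),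
  with b_i = b ! (i - 1) (positions indexed from 1).\<close>

definition occ10 :: "bool list \<Rightarrow> nat list" where
  "occ10 b = filter (\<lambda>i. b ! (i - 1) \<and> \<not> b ! i) [1..<length b]"

definition changes :: "bool list \<Rightarrow> nat" where
  "changes b = card {i. 1 \<le> i \<and> i < length b \<and> b ! (i - 1) \<noteq> b ! i}"

definition a_count :: "nat \<Rightarrow> nat \<Rightarrow> nat \<Rightarrow> nat" where
  "a_count n s r = card {b :: bool list. length b = (s + 2) * n + 1 \<and>
     (\<forall>j. 1 \<le> j \<and> j \<le> length (occ10 b) \<longrightarrow> occ10 b ! (j - 1) \<ge> (s + 2) * j + 1) \<and>
     changes b \<le> r}"

end

theory Submission
  imports Defs
begin

(* Proof of the counting formula for a(n,s,r), via the cycle lemma.  Write m = s + 2.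

   For an integer sequence x with all steps at most 1, the number of
      rotations of x whose nonempty prefix sums are all positive equals the total sum of x
      (or 0 if it is not positive).
   2. Difference encoding.  A binary sequence b of length mn + 1 is determined by b_1 and its
      difference sequence d (d_i = [b_i ~= b_(i+1)]) of length mn.  Its number of changes is the
      number of ones of d; since occurrences of 10 and 01 alternate, the condition on the
      occurrences of 10 becomes the ballot condition "ones among the first mp entries of d,
      plus b_1, is at most 2p - 1" for p = 1..n.
   3. Double counting.  Cutting d into n blocks of length m and replacing each block B by the
      two steps 1, 1 - |B|_1 gives a walk whose positive-prefix rotations are exactly the pairs
      (b_1, block rotation of d) satisfying the ballot condition.  By the cycle lemma each d
      with k ones contributes 2n - k such pairs, so averaging over block rotations gives
      n * g(k) = (2n - k) * C(mn, k), where g(k) counts admissible pairs (b_1, d) with k ones.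
   4. Summing g(k) over k <= r and Pascal's rule give the closed form. *)


section \<open>The cycle lemma\<close>

fun pos_prefixes :: "int \<Rightarrow> int list \<Rightarrow> bool" where
  "pos_prefixes c [] = True"
| "pos_prefixes c (a # xs) \<longleftrightarrow> 1 \<le> c + a \<and> pos_prefixes (c + a) xs"

lemma pos_prefixes_append:
  "pos_prefixes c (xs @ ys) \<longleftrightarrow> pos_prefixes c xs \<and> pos_prefixes (c + sum_list xs) ys"
  by (induction xs arbitrary: c) (auto simp: add.assoc)

lemma pos_prefixes_sum_nonneg: "pos_prefixes c u \<Longrightarrow> 0 \<le> c \<Longrightarrow> 0 \<le> c + sum_list u"
proof (induction u arbitrary: c)
  case (Cons a u)
  then have "0 \<le> c + a + sum_list u" using Cons.IH[of "c + a"] by simp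
  then show ?case by (simp add: add.assoc)
qed simp

lemma pos_prefixes_replicate_one: "0 \<le> c \<Longrightarrow> pos_prefixes c (replicate k 1)"
  by (induction k arbitrary: c) auto

lemma pos_prefixes_merge:
  "pos_prefixes 0 (u @ [1, y] @ v) \<longleftrightarrow> pos_prefixes 0 (u @ [y + 1] @ v)"
proof (cases "pos_prefixes 0 u")
  case True
  then have "sum_list u \<ge> 0" using pos_prefixes_sum_nonneg[of 0 u] by simp
  then show ?thesis using True by (simp add: pos_prefixes_append algebra_simps)
qed (simp add: pos_prefixes_append)

definition good_rotations :: "int list \<Rightarrow> nat" where
  "good_rotations x = (\<Sum>t<length x. of_bool (pos_prefixes 0 (rotate t x)))"

lemma good_rotations_rotate1: "good_rotations (rotate1 x) = good_rotations x"
proof -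
  define f where "f t = (of_bool (pos_prefixes 0 (rotate t x)) :: nat)" for t
  have "good_rotations (rotate1 x) = (\<Sum>t<length x. f (Suc t))"
    unfolding good_rotations_def f_def by (simp add: rotate1_rotate_swap rotate_rotate)
  also have "\<dots> = (\<Sum>t<Suc (length x). f t) - f 0"
    by (subst sum.lessThan_Suc_shift) simp
  also have "\<dots> = (\<Sum>t<length x. f t)"
    unfolding f_def by simp
  finally show ?thesis unfolding good_rotations_def f_def .
qed

lemma good_rotations_rotate: "good_rotations (rotate i x) = good_rotations x"
  by (induction i) (simp_all add: good_rotations_rotate1)

lemma sum_list_rotate: "sum_list (rotate i xs) = sum_list (xs :: int list)"
  by (metis add.commute append_take_drop_id rotate_drop_take sum_list_append)

lemma rotate_Suc_Cons:
  "i < length rest \<Longrightarrow> rotate (Suc i) (a # rest) = drop i rest @ [a] @ take i rest"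
  using rotate_append[of "[a]" rest] by (simp add: rotate_rotate[symmetric] rotate_drop_take
      del: rotate_Suc)

lemma rotate_Suc_Suc_Cons:
  "i < length rest \<Longrightarrow> rotate (Suc (Suc i)) (a # b # rest) = drop i rest @ [a, b] @ take i rest"
  using rotate_append[of "[a, b]" rest]
  by (simp add: rotate_rotate[symmetric, of i 2] rotate_drop_take numeral_2_eq_2 del: rotate_Suc)

text \<open>Reduction step: merging a leading step 1 with a following step y < 1 preserves the number
  of good rotations (the rotation starting at y is never good, all others correspond).\<close>
lemma good_rotations_merge:
  assumes "y < 1"
  shows "good_rotations (1 # y # rest) = good_rotations ((y + 1) # rest)"
proof -
  define K where "K = length rest"
  have start: "pos_prefixes 0 (1 # y # rest) = pos_prefixes 0 ((y + 1) # rest)"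
    using pos_prefixes_merge[of "[]" y rest] by simp
  have at_y: "\<not> pos_prefixes 0 (rotate 1 (1 # y # rest))"
    using assms by simp
  have later: "pos_prefixes 0 (rotate (Suc (Suc k)) (1 # y # rest))
             = pos_prefixes 0 (rotate (Suc k) ((y + 1) # rest))" if "k < K" for k
    using that pos_prefixes_merge[of "drop k rest" y "take k rest"] K_def
    by (simp only: rotate_Suc_Suc_Cons rotate_Suc_Cons)
  have "good_rotations (1 # y # rest)
      = (\<Sum>t<Suc (Suc K). of_bool (pos_prefixes 0 (rotate t (1 # y # rest))))"
    unfolding good_rotations_def K_def by simp
  also have "\<dots> = of_bool (pos_prefixes 0 (rotate 0 (1 # y # rest)))
      + of_bool (pos_prefixes 0 (rotate 1 (1 # y # rest)))
      + (\<Sum>k<K. of_bool (pos_prefixes 0 (rotate (Suc (Suc k)) (1 # y # rest))))"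
    by (simp only: sum.lessThan_Suc_shift) simp
  also have "\<dots> = of_bool (pos_prefixes 0 (rotate 0 ((y + 1) # rest)))
      + (\<Sum>k<K. of_bool (pos_prefixes 0 (rotate (Suc k) ((y + 1) # rest))))"
    using start at_y later by simp
  also have "\<dots> = good_rotations ((y + 1) # rest)"
    unfolding good_rotations_def K_def by (simp only: length_Cons sum.lessThan_Suc_shift)
  finally show ?thesis .
qed

lemma exists_one_before_non_one:
  assumes "i0 < length x" "x ! i0 = (1::int)" "j < length x" "x ! j \<noteq> 1"
  shows "\<exists>i<length x. x ! i = 1 \<and> x ! (Suc i mod length x) \<noteq> 1"
proof (rule ccontr)
  assume "\<not> ?thesis"
  then have step: "\<And>i. i < length x \<Longrightarrow> x ! i = 1 \<Longrightarrow> x ! (Suc i mod length x) = 1" by blast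
  define L where "L = length x"
  have L: "L > 0" using assms(1) unfolding L_def by linarith
  have ones: "x ! ((i0 + e) mod L) = 1" for e
  proof (induction e)
    case 0 then show ?case using assms L_def by simp
  next
    case (Suc e)
    have "(i0 + Suc e) mod L = Suc ((i0 + e) mod L) mod L" by (simp add: mod_Suc_eq)
    then show ?case using step[of "(i0 + e) mod L"] Suc L L_def by simp
  qed
  from ones[of "j + L - i0"] have "x ! ((j + L) mod L) = 1"
    using assms L_def by (simp add: add.commute)
  then show False using assms L_def by simp
qed

lemma rotation_one_then_smaller:
  assumes steps: "\<forall>a\<in>set x. a \<le> 1"
    and "i0 < length x" "x ! i0 = (1::int)" "j < length x" "x ! j \<noteq> 1"
  obtains i y rest where "rotate i x = 1 # y # rest" and "y < 1"
proof -
  obtain i where i: "i < length x" "x ! i = 1" "x ! (Suc i mod length x) \<noteq> 1"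
    using exists_one_before_non_one assms(2-) by blast
  then have L2: "length x \<ge> 2" by (cases "length x = 1") auto
  define x' where "x' = rotate i x"
  have "x' ! 0 = 1"
    unfolding x'_def using i L2 by (subst nth_rotate) auto
  have "x' ! 1 \<noteq> 1"
    unfolding x'_def using i L2 by (simp add: nth_rotate add.commute)
  have "length x' \<ge> 2" unfolding x'_def using L2 by simp
  with \<open>x' ! 0 = 1\<close> have x': "x' = 1 # x' ! 1 # drop 2 x'"
    by (cases x'; cases "tl x'") auto
  have "x' ! 1 \<le> 1" using steps \<open>length x' \<ge> 2\<close> unfolding x'_def
    by (metis One_nat_def Suc_1 Suc_le_lessD nth_mem set_rotate)
  with \<open>x' ! 1 \<noteq> 1\<close> have "x' ! 1 < 1" by simp
  with x' show ?thesis using that unfolding x'_def by metis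
qed

text \<open>The cycle lemma (Dvoretzky--Motzkin / Raney), by induction on the length: rotate so the
  list starts with a 1 followed by a smaller step and merge the two.\<close>
lemma cycle_lemma: "\<forall>a\<in>set x. a \<le> 1 \<Longrightarrow> good_rotations x = nat (sum_list x)"
proof (induction "length x" arbitrary: x rule: less_induct)
  case less
  consider (all_one) "\<forall>a\<in>set x. a = 1" | (no_one) "\<forall>a\<in>set x. a \<noteq> 1"
    | (mixed) i0 j where "i0 < length x" "x ! i0 = 1" "j < length x" "x ! j \<noteq> 1"
    by (metis in_set_conv_nth)
  then show ?case
  proof cases
    case all_one
    then have x: "x = replicate (length x) 1" by (simp add: replicate_length_same)
    have "rotate t (replicate k a) = replicate k a" for t k and a :: int
      by (induction t) simp_all
    then have "pos_prefixes 0 (rotate t x)" for t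
      by (subst x) (simp add: pos_prefixes_replicate_one)
    moreover have "sum_list x = int (length x)"
      by (subst x) (simp add: sum_list_replicate)
    ultimately show ?thesis by (simp add: good_rotations_def)
  next
    case no_one
    then have nonpos: "\<forall>a\<in>set x. a \<le> 0" using less.prems by fastforce
    have "\<not> pos_prefixes 0 (rotate t x)" if "t < length x" for t
    proof -
      have "rotate t x \<noteq> []" using that by auto
      then obtain a u where au: "rotate t x = a # u" by (meson neq_Nil_conv)
      then have "a \<in> set x" by (metis list.set_intros(1) set_rotate)
      then show ?thesis using au nonpos by auto
    qed
    moreover have "sum_list x \<le> 0" using nonpos by (simp add: sum_list_nonpos)
    ultimately show ?thesis by (simp add: good_rotations_def)
  next
    case mixed
    with less.prems obtain i y rest where x': "rotate i x = 1 # y # rest" and "y < 1"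
      using rotation_one_then_smaller by blast
    define x'' where "x'' = (y + 1) # rest"
    have "length x'' < length x" unfolding x''_def using arg_cong[OF x', of length] by simp
    moreover have "\<forall>a\<in>set x''. a \<le> 1"
      using less.prems set_rotate[of i x] \<open>y < 1\<close> unfolding x' x''_def by auto
    ultimately have IH: "good_rotations x'' = nat (sum_list x'')" using less.hyps by blast
    have "good_rotations x = good_rotations (1 # y # rest)"
      unfolding x'[symmetric] by (rule good_rotations_rotate[symmetric])
    also have "\<dots> = good_rotations x''"
      unfolding x''_def by (rule good_rotations_merge[OF \<open>y < 1\<close>])
    finally have "good_rotations x = good_rotations x''" .
    moreover have "sum_list x'' = sum_list x"
      using sum_list_rotate[of i x] unfolding x' x''_def by simp
    ultimately show ?thesis using IH by simp
  qed
qed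


section \<open>Blocks and the associated walk\<close>

fun blocks :: "nat \<Rightarrow> nat \<Rightarrow> 'a list \<Rightarrow> 'a list list" where
  "blocks m 0 d = []"
| "blocks m (Suc n) d = take m d # blocks m n (drop m d)"

lemma length_blocks[simp]: "length (blocks m n d) = n"
  by (induction n arbitrary: d) auto

lemma length_in_blocks: "length d = m * n \<Longrightarrow> B \<in> set (blocks m n d) \<Longrightarrow> length B = m"
proof (induction n arbitrary: d)
  case (Suc n)
  then show ?case using Suc.IH[of "drop m d"] by auto
qed simp

lemma concat_blocks: "length d = m * n \<Longrightarrow> concat (blocks m n d) = d"
  by (induction n arbitrary: d) (auto simp: algebra_simps)

lemma blocks_concat:
  "length bs = n \<Longrightarrow> \<forall>B\<in>set bs. length B = m \<Longrightarrow> blocks m n (concat bs) = bs"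
  by (induction bs arbitrary: n) auto

lemma rotate_concat_blocks:
  assumes "\<forall>B\<in>set bs. length B = m"
  shows "rotate (m * t) (concat bs) = concat (rotate t bs)"
proof (induction t)
  case (Suc t)
  have rot1: "rotate m (concat cs) = concat (rotate1 cs)" if "\<forall>B\<in>set cs. length B = m" for cs
    using that rotate_append[of "hd cs" "concat (tl cs)"] by (cases cs) auto
  have "rotate (m * Suc t) (concat bs) = rotate m (concat (rotate t bs))"
    using Suc by (metis rotate_rotate mult_Suc_right)
  also have "\<dots> = concat (rotate1 (rotate t bs))"
    using assms by (intro rot1) simp
  finally show ?case by simp
qed simp

lemma take_concat_blocks:
  "\<forall>B\<in>set bs. length B = m \<Longrightarrow> take (m * p) (concat bs) = concat (take p bs)"
proof (induction bs arbitrary: p)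
  case (Cons B bs)
  then show ?case by (cases p) auto
qed simp

definition ones :: "bool list \<Rightarrow> nat" where "ones B = length (filter id B)"

lemma ones_append[simp]: "ones (a @ b) = ones a + ones b"
  by (simp add: ones_def)

lemma ones_concat: "ones (concat bs) = sum_list (map ones bs)"
  by (induction bs) (simp_all add: ones_def)

lemma ones_rotate[simp]: "ones (rotate i xs) = ones xs"
  by (metis add.commute append_take_drop_id ones_append rotate_drop_take)

lemma ones_take_blocks:
  assumes "length d = m * n"
  shows "ones (take (m * q) d) = sum_list (map ones (take q (blocks m n d)))"
proof -
  have "take (m * q) d = concat (take q (blocks m n d))"
    using take_concat_blocks[of "blocks m n d" m q] length_in_blocks[OF assms]
      concat_blocks[OF assms] by simp
  then show ?thesis by (simp add: ones_concat)
qed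

definition block_steps :: "bool list \<Rightarrow> int list" where
  "block_steps B = [1, 1 - int (ones B)]"

definition block_steps' :: "bool list \<Rightarrow> int list" where
  "block_steps' B = [1 - int (ones B), 1]"

lemma rotate1_block_steps:
  "rotate1 (concat (map block_steps bs)) = concat (map block_steps' bs)"
proof -
  have "concat (map block_steps bs) @ [1] = 1 # concat (map block_steps' bs)" for bs
    by (induction bs) (auto simp: block_steps_def block_steps'_def)
  then show ?thesis by (cases bs) (auto simp: block_steps_def block_steps'_def)
qed

lemma all_less_Suc: "(\<forall>p<Suc n. P p) \<longleftrightarrow> P 0 \<and> (\<forall>p<n. P (Suc p))"
  by (auto simp: less_Suc_eq_0_disj)

lemma pos_prefixes_block_steps:
  "0 \<le> c \<Longrightarrow> pos_prefixes c (concat (map block_steps bs)) \<longleftrightarrow>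
     (\<forall>p<length bs. 1 \<le> c + 2 * int (Suc p) - int (sum_list (map ones (take (Suc p) bs))))"
proof (induction bs arbitrary: c)
  case (Cons B bs)
  define c' where "c' = c + 2 - int (ones B)"
  have "pos_prefixes c (concat (map block_steps (B # bs)))
      \<longleftrightarrow> 1 \<le> c' \<and> pos_prefixes c' (concat (map block_steps bs))"
    using Cons.prems by (simp add: block_steps_def c'_def algebra_simps)
  also have "\<dots> \<longleftrightarrow> 1 \<le> c' \<and>
      (\<forall>p<length bs. 1 \<le> c' + 2 * int (Suc p) - int (sum_list (map ones (take (Suc p) bs))))"
    using Cons.IH[of c'] by auto
  finally show ?case
    by (simp only: length_Cons all_less_Suc) (simp add: c'_def algebra_simps)
qed simp

lemma pos_prefixes_block_steps':
  "pos_prefixes c (concat (map block_steps' bs)) \<longleftrightarrow>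
     (\<forall>p<length bs. 2 \<le> c + 2 * int (Suc p) - int (sum_list (map ones (take (Suc p) bs))))"
proof (induction bs arbitrary: c)
  case (Cons B bs)
  define c' where "c' = c + 2 - int (ones B)"
  have "pos_prefixes c (concat (map block_steps' (B # bs)))
      \<longleftrightarrow> 2 \<le> c' \<and> pos_prefixes c' (concat (map block_steps' bs))"
    by (auto simp: block_steps'_def c'_def algebra_simps)
  also have "\<dots> \<longleftrightarrow> 2 \<le> c' \<and>
      (\<forall>p<length bs. 2 \<le> c' + 2 * int (Suc p) - int (sum_list (map ones (take (Suc p) bs))))"
    using Cons.IH[of c'] by auto
  finally show ?case
    by (simp only: length_Cons all_less_Suc) (simp add: c'_def algebra_simps)
qed simp

definition walk :: "nat \<Rightarrow> nat \<Rightarrow> bool list \<Rightarrow> int list" where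
  "walk m n d = concat (map block_steps (blocks m n d))"

lemma length_walk: "length (walk m n d) = 2 * n"
proof -
  have "length (concat (map block_steps bs)) = 2 * length bs" for bs
    by (induction bs) (auto simp: block_steps_def)
  then show ?thesis unfolding walk_def by simp
qed

lemma sum_list_walk:
  assumes "length d = m * n"
  shows "sum_list (walk m n d) = 2 * int n - int (ones d)"
proof -
  have "sum_list (concat (map block_steps bs)) = 2 * int (length bs) - int (ones (concat bs))"
    for bs by (induction bs) (auto simp: block_steps_def ones_def)
  then show ?thesis unfolding walk_def using assms by (simp add: concat_blocks)
qed

lemma walk_steps_le_one: "\<forall>a\<in>set (walk m n d). a \<le> 1"
  by (auto simp: walk_def block_steps_def)

lemma walk_rotate:
  assumes l: "length d = m * n"
  shows "walk m n (rotate (m * t) d) = rotate (2 * t) (walk m n d)"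
proof -
  define bs where "bs = blocks m n d"
  have lengths: "\<forall>B\<in>set bs. length B = m" using length_in_blocks[OF l] bs_def by auto
  have "rotate (m * t) d = concat (rotate t bs)"
    using rotate_concat_blocks[OF lengths, of t] concat_blocks[OF l] bs_def by simp
  then have "blocks m n (rotate (m * t) d) = rotate t bs"
    using blocks_concat[of "rotate t bs" n m] lengths bs_def by simp
  then have "walk m n (rotate (m * t) d) = concat (rotate t (map block_steps bs))"
    unfolding walk_def by (simp add: rotate_map)
  also have "\<dots> = rotate (2 * t) (concat (map block_steps bs))"
    by (rule rotate_concat_blocks[symmetric]) (auto simp: block_steps_def)
  finally show ?thesis unfolding walk_def bs_def .
qed


section \<open>The ballot condition and the double count\<close>

text \<open>The ballot condition on a difference sequence d, with x the first entry of the binary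
  sequence: for p = 1..n, the ones among the first m * p entries of d, plus x, are at most
  2p - 1.\<close>
definition ballot :: "nat \<Rightarrow> nat \<Rightarrow> bool \<Rightarrow> bool list \<Rightarrow> bool" where
  "ballot m n x d \<longleftrightarrow> (\<forall>p. 1 \<le> p \<and> p \<le> n \<longrightarrow> ones (take (m * p) d) + of_bool x \<le> 2 * p - 1)"

lemma ball_reindex: "(\<forall>p. 1 \<le> p \<and> p \<le> n \<longrightarrow> P p) \<longleftrightarrow> (\<forall>p<n. P (Suc p))"
proof
  show "\<forall>p. 1 \<le> p \<and> p \<le> n \<longrightarrow> P p \<Longrightarrow> \<forall>p<n. P (Suc p)" by simp
  show "\<forall>p<n. P (Suc p) \<Longrightarrow> \<forall>p. 1 \<le> p \<and> p \<le> n \<longrightarrow> P p"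
    by (metis Suc_le_eq Suc_pred less_le_trans zero_less_one)
qed

lemma ballot_False_iff:
  assumes l: "length d = m * n"
  shows "ballot m n False d \<longleftrightarrow> pos_prefixes 0 (walk m n d)"
proof -
  have "pos_prefixes 0 (walk m n d) \<longleftrightarrow>
      (\<forall>p<n. 1 \<le> 2 * int (Suc p) - int (ones (take (m * Suc p) d)))"
    unfolding walk_def ones_take_blocks[OF l] by (subst pos_prefixes_block_steps) simp_all
  also have "\<dots> \<longleftrightarrow> ballot m n False d"
    unfolding ballot_def ball_reindex by (intro all_cong) auto
  finally show ?thesis by simp
qed

lemma ballot_True_iff:
  assumes l: "length d = m * n"
  shows "ballot m n True d \<longleftrightarrow> pos_prefixes 0 (rotate1 (walk m n d))"
proof -
  have "pos_prefixes 0 (rotate1 (walk m n d)) \<longleftrightarrow>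
      (\<forall>p<n. 2 \<le> 2 * int (Suc p) - int (ones (take (m * Suc p) d)))"
    unfolding walk_def rotate1_block_steps ones_take_blocks[OF l]
    by (subst pos_prefixes_block_steps') simp
  also have "\<dots> \<longleftrightarrow> ballot m n True d"
    unfolding ballot_def ball_reindex by (intro all_cong) auto
  finally show ?thesis by simp
qed

lemma sum_lessThan_double: "(\<Sum>u<2 * n. h u) = (\<Sum>t<n. h (2 * t) + h (Suc (2 * t)) :: nat)"
  by (induction n) simp_all

lemma ballot_rotations:
  assumes l: "length d = m * n" and k: "ones d \<le> 2 * n"
  shows "(\<Sum>t<n. of_bool (ballot m n False (rotate (m * t) d))
             + of_bool (ballot m n True (rotate (m * t) d))) = 2 * n - ones d"
proof -
  define z where "z = walk m n d"
  have lr: "length (rotate (m * t) d) = m * n" for t using l by simp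
  have "2 * n - ones d = good_rotations z"
    using cycle_lemma[OF walk_steps_le_one] sum_list_walk[OF l] k unfolding z_def by simp
  also have "\<dots> = (\<Sum>u<2 * n. of_bool (pos_prefixes 0 (rotate u z)))"
    unfolding good_rotations_def z_def length_walk ..
  also have "\<dots> = (\<Sum>t<n. of_bool (pos_prefixes 0 (rotate (2 * t) z))
        + of_bool (pos_prefixes 0 (rotate (Suc (2 * t)) z)))"
    by (rule sum_lessThan_double)
  also have "\<dots> = (\<Sum>t<n. of_bool (ballot m n False (rotate (m * t) d))
             + of_bool (ballot m n True (rotate (m * t) d)))"
    using ballot_False_iff[OF lr] ballot_True_iff[OF lr] walk_rotate[OF l] z_def by simp
  finally show ?thesis by simp
qed

lemma finite_lists_length: "finite {d :: bool list. length d = N \<and> Q d}"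
  using finite_lists_length_eq[of "UNIV :: bool set" N] by (rule rev_finite_subset) auto

lemma card_lists_ones: "card {d :: bool list. length d = N \<and> ones d = k} = N choose k"
proof -
  define support where "support d = {i. i < N \<and> d ! i}" for d :: "bool list"
  have ones_support: "ones d = card (support d)" if "length d = N" for d
    unfolding ones_def support_def using that by (simp add: length_filter_conv_card)
  have "bij_betw support {d. length d = N \<and> ones d = k} {A. A \<subseteq> {..<N} \<and> card A = k}"
  proof (rule bij_betw_imageI)
    show "inj_on support {d. length d = N \<and> ones d = k}"
      by (rule inj_onI, rule nth_equalityI) (auto simp: support_def set_eq_iff)
    show "support ` {d. length d = N \<and> ones d = k} = {A. A \<subseteq> {..<N} \<and> card A = k}"
    proof
      show "support ` {d. length d = N \<and> ones d = k} \<subseteq> {A. A \<subseteq> {..<N} \<and> card A = k}"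
        using ones_support by (auto simp: support_def)
      show "{A. A \<subseteq> {..<N} \<and> card A = k} \<subseteq> support ` {d. length d = N \<and> ones d = k}"
      proof
        fix A assume A: "A \<in> {A. A \<subseteq> {..<N} \<and> card A = k}"
        define d where "d = map (\<lambda>i. i \<in> A) [0..<N]"
        have "support d = A" "length d = N" using A unfolding support_def d_def by auto
        then show "A \<in> support ` {d. length d = N \<and> ones d = k}"
          using ones_support A by force
      qed
    qed
  qed
  then have "card {d. length d = N \<and> ones d = k} = card {A. A \<subseteq> {..<N} \<and> card A = k}"
    by (rule bij_betw_same_card)
  also have "\<dots> = N choose k" using n_subsets[of "{..<N}" k] by simp
  finally show ?thesis .
qed

lemma card_filter_bij:
  assumes "bij f" and "\<And>d. f d \<in> S \<longleftrightarrow> d \<in> S"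
  shows "card {d\<in>S. P (f d)} = card {d\<in>S. P d}"
proof -
  have "{d\<in>S. P (f d)} = f -` {d\<in>S. P d}" using assms(2) by auto
  then show ?thesis
    using card_vimage_inj[of f "{d\<in>S. P d}"] assms(1) by (simp add: bij_is_inj bij_is_surj)
qed

text \<open>Double counting of the pairs (d, block rotation) with d of length m * n having k ones:
  each of the n rotations gives the same count by rotation invariance.\<close>
lemma ballot_count:
  assumes k: "k \<le> 2 * n"
  shows "n * (card {d. (length d = m * n \<and> ones d = k) \<and> ballot m n False d}
             + card {d. (length d = m * n \<and> ones d = k) \<and> ballot m n True d})
         = (2 * n - k) * (m * n choose k)"
proof -
  define S where "S = {d :: bool list. length d = m * n \<and> ones d = k}"
  have fS: "finite S" unfolding S_def by (rule finite_lists_length)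
  define h where "h x t d = (of_bool (ballot m n x (rotate (m * t) d)) :: nat)" for x t d
  have per_rotation: "(\<Sum>d\<in>S. h x t d) = card {d\<in>S. ballot m n x d}" for x t
  proof -
    have "bij (rotate (m * t) :: bool list \<Rightarrow> bool list)"
      unfolding rotate_def by (simp add: bij_rotate1)
    then have "card {d\<in>S. ballot m n x (rotate (m * t) d)} = card {d\<in>S. ballot m n x d}"
      by (rule card_filter_bij) (simp add: S_def)
    then show ?thesis unfolding h_def using fS by (simp add: sum.If_cases Int_def)
  qed
  have "(2 * n - k) * (m * n choose k) = (\<Sum>d\<in>S. 2 * n - k)"
    using card_lists_ones[of "m * n" k] unfolding S_def by simp
  also have "\<dots> = (\<Sum>d\<in>S. \<Sum>t<n. h False t d + h True t d)"
    using ballot_rotations k unfolding h_def S_def by (intro sum.cong) auto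
  also have "\<dots> = (\<Sum>t<n. (\<Sum>d\<in>S. h False t d) + (\<Sum>d\<in>S. h True t d))"
    by (subst sum.swap) (simp add: sum.distrib)
  also have "\<dots> = n * (card {d\<in>S. ballot m n False d} + card {d\<in>S. ballot m n True d})"
    using per_rotation by simp
  finally have count: "n * (card {d\<in>S. ballot m n False d} + card {d\<in>S. ballot m n True d})
      = (2 * n - k) * (m * n choose k)" by (rule sym)
  have "{d\<in>S. ballot m n x d} = {d. (length d = m * n \<and> ones d = k) \<and> ballot m n x d}" for x
    unfolding S_def by blast
  then show ?thesis using count by simp
qed


section \<open>Difference sequences\<close>

fun diffs :: "bool list \<Rightarrow> bool list" where
  "diffs (a # b # r) = (a \<noteq> b) # diffs (b # r)"
| "diffs _ = []"

fun undiff :: "bool \<Rightarrow> bool list \<Rightarrow> bool list" where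
  "undiff x [] = [x]"
| "undiff x (c # cs) = x # undiff (x \<noteq> c) cs"

lemma length_diffs[simp]: "length (diffs b) = length b - 1"
  by (induction b rule: diffs.induct) auto

lemma nth_diffs: "i < length b - 1 \<Longrightarrow> diffs b ! i = (b ! i \<noteq> b ! Suc i)"
proof (induction b arbitrary: i rule: diffs.induct)
  case (1 a b r)
  then show ?case by (cases i) auto
qed auto

lemma length_undiff[simp]: "length (undiff x d) = Suc (length d)"
  by (induction d arbitrary: x) auto

lemma undiff_Cons: "\<exists>t. undiff x d = x # t"
  by (cases d) auto

lemma nth0_undiff[simp]: "undiff x d ! 0 = x"
  by (cases d) auto

lemma diffs_undiff[simp]: "diffs (undiff x d) = d"
proof (induction d arbitrary: x)
  case (Cons c cs)
  obtain t where t: "undiff (x \<noteq> c) cs = (x \<noteq> c) # t" using undiff_Cons by blast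
  have "diffs (undiff x (c # cs)) = (x \<noteq> (x \<noteq> c)) # diffs ((x \<noteq> c) # t)"
    using t by simp
  then show ?case using Cons.IH[of "x \<noteq> c"] t by auto
qed simp

lemma undiff_diffs: "b \<noteq> [] \<Longrightarrow> undiff (b ! 0) (diffs b) = b"
proof (induction b rule: diffs.induct)
  case (1 a b r)
  have "(a \<noteq> (a \<noteq> b)) = b" by auto
  then show ?case using 1 by simp
qed auto

lemma card_by_first_and_diffs:
  "card {b :: bool list. length b = Suc N \<and> P (b ! 0) (diffs b)}
     = card {d. length d = N \<and> P True d} + card {d. length d = N \<and> P False d}"
proof -
  define A where "A = {b :: bool list. length b = Suc N \<and> P (b ! 0) (diffs b)}"
  define T where "T = Sigma UNIV (\<lambda>x. {d. length d = N \<and> P x d})"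
  have "bij_betw (\<lambda>b. (b ! 0, diffs b)) A T"
  proof (rule bij_betw_byWitness[where f' = "\<lambda>(x, d). undiff x d"])
    show "\<forall>b\<in>A. (\<lambda>(x, d). undiff x d) (b ! 0, diffs b) = b"
    proof
      fix b assume "b \<in> A"
      then have "b \<noteq> []" unfolding A_def by auto
      then show "(\<lambda>(x, d). undiff x d) (b ! 0, diffs b) = b" by (simp add: undiff_diffs)
    qed
    show "\<forall>y\<in>T. (\<lambda>b. (b ! 0, diffs b)) ((\<lambda>(x, d). undiff x d) y) = y"
      unfolding T_def by auto
    show "(\<lambda>b. (b ! 0, diffs b)) ` A \<subseteq> T" unfolding A_def T_def by auto
    show "(\<lambda>(x, d). undiff x d) ` T \<subseteq> A" unfolding A_def T_def by auto
  qed
  then have "card A = card T" by (rule bij_betw_same_card)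
  also have "\<dots> = (\<Sum>x\<in>UNIV. card {d. length d = N \<and> P x d})"
    unfolding T_def using finite_lists_length by (intro card_SigmaI) auto
  finally show ?thesis unfolding A_def by (simp add: UNIV_bool add.commute)
qed

definition tens_upto :: "bool list \<Rightarrow> nat \<Rightarrow> nat" where
  "tens_upto b q = card {i. 1 \<le> i \<and> i \<le> q \<and> b ! (i - 1) \<and> \<not> b ! i}"

definition changes_upto :: "bool list \<Rightarrow> nat \<Rightarrow> nat" where
  "changes_upto b q = card {i. 1 \<le> i \<and> i \<le> q \<and> b ! (i - 1) \<noteq> b ! i}"

lemma card_upto_Suc:
  "card {i. 1 \<le> i \<and> i \<le> Suc q \<and> P i} = card {i. 1 \<le> i \<and> i \<le> q \<and> P i} + of_bool (P (Suc q))"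
proof -
  have fin: "finite {i. 1 \<le> i \<and> i \<le> q \<and> P i}" by (rule finite_subset[of _ "{..q}"]) auto
  have "{i. 1 \<le> i \<and> i \<le> Suc q \<and> P i}
      = (if P (Suc q) then insert (Suc q) else id) {i. 1 \<le> i \<and> i \<le> q \<and> P i}"
    by (auto simp: le_Suc_eq)
  then show ?thesis using fin by simp
qed

text \<open>Occurrences of 10 and 01 alternate: twice the number of 10's, corrected by the first and
  the last entry, is the number of changes.\<close>
lemma tens_changes_parity:
  "2 * tens_upto b q + of_bool (b ! q) = changes_upto b q + of_bool (b ! 0)"
proof (induction q)
  case 0
  have "tens_upto b 0 = 0" "changes_upto b 0 = 0" unfolding tens_upto_def changes_upto_def by auto
  then show ?case by simp
next
  case (Suc q)
  then show ?case unfolding tens_upto_def changes_upto_def card_upto_Suc by auto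
qed

lemma tens_upto_le_iff:
  "1 \<le> p \<Longrightarrow> tens_upto b q \<le> p - 1 \<longleftrightarrow> changes_upto b q + of_bool (b ! 0) \<le> 2 * p - 1"
  using tens_changes_parity[of b q] by (cases "b ! q"; cases "b ! 0") auto

lemma changes_upto_ones:
  assumes q: "q \<le> length b - 1"
  shows "changes_upto b q = ones (take q (diffs b))"
proof -
  have "ones (take q (diffs b)) = card {i. i < q \<and> take q (diffs b) ! i}"
    unfolding ones_def using q by (simp add: length_filter_conv_card min_def)
  also have "\<dots> = card {i. i < q \<and> b ! i \<noteq> b ! Suc i}"
    using q by (intro arg_cong[where f = card]) (auto simp: nth_diffs)
  also have "\<dots> = card (Suc ` {i. i < q \<and> b ! i \<noteq> b ! Suc i})"
    by (rule card_image[symmetric]) simp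
  also have "Suc ` {i. i < q \<and> b ! i \<noteq> b ! Suc i} = {i. 1 \<le> i \<and> i \<le> q \<and> b ! (i - 1) \<noteq> b ! i}"
  proof
    show "Suc ` {i. i < q \<and> b ! i \<noteq> b ! Suc i} \<subseteq> {i. 1 \<le> i \<and> i \<le> q \<and> b ! (i - 1) \<noteq> b ! i}"
      by auto
    show "{i. 1 \<le> i \<and> i \<le> q \<and> b ! (i - 1) \<noteq> b ! i} \<subseteq> Suc ` {i. i < q \<and> b ! i \<noteq> b ! Suc i}"
    proof
      fix i assume i: "i \<in> {i. 1 \<le> i \<and> i \<le> q \<and> b ! (i - 1) \<noteq> b ! i}"
      then obtain j where "i = Suc j" by (cases i) auto
      then show "i \<in> Suc ` {i. i < q \<and> b ! i \<noteq> b ! Suc i}" using i by auto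
    qed
  qed
  finally show ?thesis unfolding changes_upto_def by simp
qed

lemma changes_eq_ones_diffs: "changes b = ones (diffs b)"
proof -
  have "changes b = changes_upto b (length b - 1)"
    unfolding changes_def changes_upto_def by (intro arg_cong[where f = card]) auto
  then show ?thesis using changes_upto_ones[of "length b - 1" b] by simp
qed

lemma sorted_nth_le_iff_filter:
  "sorted xs \<Longrightarrow> j < length xs \<Longrightarrow> xs ! j \<le> (a::nat) \<longleftrightarrow> j < length (filter (\<lambda>x. x \<le> a) xs)"
proof (induction xs arbitrary: j)
  case (Cons x xs)
  show ?case
  proof (cases "x \<le> a")
    case True
    then show ?thesis using Cons by (cases j) auto
  next
    case False
    then have "filter (\<lambda>x. x \<le> a) xs = []" using Cons.prems(1) by (auto simp: filter_empty_conv)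
    moreover have "(x # xs) ! j \<ge> x" using Cons.prems by (cases j) (auto simp: nth_mem)
    ultimately show ?thesis using False by auto
  qed
qed simp

lemma occ10_sorted: "sorted (occ10 b)"
  unfolding occ10_def by (simp add: sorted_filter[where f = id, simplified])

lemma occ10_less_length: "x \<in> set (occ10 b) \<Longrightarrow> x < length b"
  unfolding occ10_def by auto

lemma length_filter_occ10:
  assumes "q < length b"
  shows "length (filter (\<lambda>x. x \<le> q) (occ10 b)) = tens_upto b q"
proof -
  let ?P = "\<lambda>i. (b ! (i - 1) \<and> \<not> b ! i) \<and> i \<le> q"
  have "length (filter (\<lambda>x. x \<le> q) (occ10 b)) = length (filter ?P [1..<length b])"
    unfolding occ10_def by (simp add: conj_commute)
  also have "\<dots> = card (set (filter ?P [1..<length b]))"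
    by (rule distinct_card[symmetric]) simp
  also have "set (filter ?P [1..<length b]) = {i. 1 \<le> i \<and> i \<le> q \<and> b ! (i - 1) \<and> \<not> b ! i}"
    using assms by auto
  finally show ?thesis unfolding tens_upto_def .
qed

lemma occ10_condition_iff:
  assumes lb: "length b = m * n + 1" and n: "n \<ge> 1"
  shows "(\<forall>j. 1 \<le> j \<and> j \<le> length (occ10 b) \<longrightarrow> occ10 b ! (j - 1) \<ge> m * j + 1)
     \<longleftrightarrow> (\<forall>p. 1 \<le> p \<and> p \<le> n \<longrightarrow> tens_upto b (m * p) \<le> p - 1)"
    (is "?occ \<longleftrightarrow> ?tens")
proof
  have early_iff: "occ10 b ! (p - 1) \<le> m * p \<longleftrightarrow> p - 1 < tens_upto b (m * p)"
    if "p - 1 < length (occ10 b)" "p \<le> n" for p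
  proof -
    have "m * p < length b" using lb that(2) by (simp add: mult_le_mono2 le_imp_less_Suc)
    then show ?thesis
      using sorted_nth_le_iff_filter[OF occ10_sorted that(1)] length_filter_occ10 by simp
  qed
  show "?occ \<Longrightarrow> ?tens"
  proof (intro allI impI)
    fix p assume occ: ?occ and p: "1 \<le> p \<and> p \<le> n"
    have "m * p < length b" using lb p by (simp add: mult_le_mono2 le_imp_less_Suc)
    then have "tens_upto b (m * p) \<le> length (occ10 b)"
      using length_filter_occ10 length_filter_le by metis
    then show "tens_upto b (m * p) \<le> p - 1"
      using early_iff[of p] occ p by fastforce
  qed
  show "?tens \<Longrightarrow> ?occ"
  proof (intro allI impI, rule ccontr)
    fix j assume tens: ?tens and j: "1 \<le> j \<and> j \<le> length (occ10 b)"
      and early: "\<not> occ10 b ! (j - 1) \<ge> m * j + 1"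
    have "tens_upto b (m * n) = length (occ10 b)"
    proof -
      have "filter (\<lambda>x. x \<le> m * n) (occ10 b) = occ10 b"
        using occ10_less_length lb by (intro filter_True) fastforce
      then show ?thesis using length_filter_occ10[of "m * n" b] lb by simp
    qed
    then have "j \<le> n" using tens n j by fastforce
    then show False using early_iff[of j] tens j early by fastforce
  qed
qed

lemma admissible_iff_ballot:
  assumes n: "n \<ge> 1" and lb: "length b = m * n + 1"
  shows "((\<forall>j. 1 \<le> j \<and> j \<le> length (occ10 b) \<longrightarrow> occ10 b ! (j - 1) \<ge> m * j + 1) \<and> changes b \<le> r)
     \<longleftrightarrow> ballot m n (b ! 0) (diffs b) \<and> ones (diffs b) \<le> r"
proof -
  have "(\<forall>p. 1 \<le> p \<and> p \<le> n \<longrightarrow> tens_upto b (m * p) \<le> p - 1) \<longleftrightarrow> ballot m n (b ! 0) (diffs b)"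
    unfolding ballot_def
  proof (intro all_cong imp_cong refl)
    fix p assume p: "1 \<le> p \<and> p \<le> n"
    then have "m * p \<le> length b - 1" using lb by simp
    then show "tens_upto b (m * p) \<le> p - 1
        \<longleftrightarrow> ones (take (m * p) (diffs b)) + of_bool (b ! 0) \<le> 2 * p - 1"
      using tens_upto_le_iff[of p b "m * p"] p changes_upto_ones by simp
  qed
  then show ?thesis
    using occ10_condition_iff[OF lb n] changes_eq_ones_diffs by simp
qed


section \<open>The closed form\<close>

lemma card_ones_le_split:
  "card {d :: bool list. length d = N \<and> P d \<and> ones d \<le> r}
     = (\<Sum>k\<le>r. card {d. (length d = N \<and> ones d = k) \<and> P d})"
proof (induction r)
  case 0
  have "{d :: bool list. length d = N \<and> P d \<and> ones d \<le> 0} = {d. (length d = N \<and> ones d = 0) \<and> P d}"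
    by auto
  then show ?case by simp
next
  case (Suc r)
  have "{d :: bool list. length d = N \<and> P d \<and> ones d \<le> Suc r}
     = {d. length d = N \<and> P d \<and> ones d \<le> r} \<union> {d. (length d = N \<and> ones d = Suc r) \<and> P d}"
    by auto
  then have "card {d :: bool list. length d = N \<and> P d \<and> ones d \<le> Suc r}
      = card {d. length d = N \<and> P d \<and> ones d \<le> r} + card {d. (length d = N \<and> ones d = Suc r) \<and> P d}"
    using finite_lists_length[of N] by (simp add: card_Un_disjoint disjoint_iff)
  then show ?case using Suc by simp
qed

text \<open>Summing the per-k counts g(k), determined by n * g(k) = (2n - k) * C(M + 1, k), over
  k \<le> r: by Pascal's rule g(k+1) = 2 C(M, k+1) - s C(M, k), which telescopes.\<close>
lemma sum_counts_closed_form: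
  fixes g :: "nat \<Rightarrow> nat" and n s r :: nat
  assumes n: "n \<ge> 1" and r: "r \<le> 2 * n"
    and g: "\<And>k. k \<le> 2 * n \<Longrightarrow> n * g k = (2 * n - k) * ((s + 2) * n choose k)"
  shows "int (\<Sum>k\<le>r. g k) = 2 * int (((s + 2) * n - 1) choose r)
           - (int s - 2) * (\<Sum>i<r. int (((s + 2) * n - 1) choose i))"
  using r
proof (induction r)
  case 0
  have "n * g 0 = n * 2" using g[of 0] by (simp add: mult.commute)
  then show ?case using n by simp
next
  case (Suc r)
  define M where "M = (s + 2) * n - 1"
  have NM: "(s + 2) * n = Suc M" unfolding M_def using n by simp
  have pascal: "int (Suc M choose Suc r) = int (M choose r) + int (M choose Suc r)"
    by simp
  have absorb: "int (Suc r * (Suc M choose Suc r)) = int (s + 2) * int n * int (M choose r)"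
  proof -
    have "Suc r * (Suc M choose Suc r) = (s + 2) * n * (M choose r)"
      using Suc_times_binomial[of r M] unfolding NM .
    then show ?thesis by (simp add: algebra_simps)
  qed
  have "int n * int (g (Suc r)) = int (2 * n - Suc r) * int (Suc M choose Suc r)"
    using g[OF Suc.prems] NM by (metis of_nat_mult)
  also have "\<dots> = (2 * int n - int (Suc r)) * int (Suc M choose Suc r)"
    using Suc.prems by (simp add: of_nat_diff)
  also have "\<dots> = 2 * int n * int (Suc M choose Suc r) - int (Suc r * (Suc M choose Suc r))"
    by (simp add: algebra_simps)
  also have "\<dots> = 2 * int n * (int (M choose r) + int (M choose Suc r))
      - int (s + 2) * int n * int (M choose r)"
    by (simp only: pascal absorb)
  also have "\<dots> = int n * (2 * int (M choose Suc r) - int s * int (M choose r))"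
    by (simp add: algebra_simps)
  finally have "int (g (Suc r)) = 2 * int (M choose Suc r) - int s * int (M choose r)"
    using n by simp
  then show ?case using Suc unfolding M_def[symmetric] by (simp add: algebra_simps)
qed

theorem theorem1p3:
  fixes n s r :: nat
  assumes "n \<ge> 1" and "r \<le> 2 * n"
  shows "int (a_count n s r) =
           2 * int (((s + 2) * n - 1) choose r)
           - (int s - 2) * (\<Sum>i<r. int (((s + 2) * n - 1) choose i))"
proof -
  define m where "m = s + 2"
  define g where "g k = card {d. (length d = m * n \<and> ones d = k) \<and> ballot m n False d}
                      + card {d. (length d = m * n \<and> ones d = k) \<and> ballot m n True d}" for k
  have "a_count n s r
      = card {b. length b = Suc (m * n) \<and> ballot m n (b ! 0) (diffs b) \<and> ones (diffs b) \<le> r}"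
    unfolding a_count_def m_def[symmetric]
  proof (intro arg_cong[where f = card] Collect_cong)
    fix b :: "bool list"
    show "(length b = m * n + 1 \<and>
        (\<forall>j. 1 \<le> j \<and> j \<le> length (occ10 b) \<longrightarrow> occ10 b ! (j - 1) \<ge> m * j + 1) \<and> changes b \<le> r)
      \<longleftrightarrow> (length b = Suc (m * n) \<and> ballot m n (b ! 0) (diffs b) \<and> ones (diffs b) \<le> r)"
      using admissible_iff_ballot[OF assms(1), of b m r] unfolding Suc_eq_plus1 by blast
  qed
  also have "\<dots> = card {d. length d = m * n \<and> ballot m n True d \<and> ones d \<le> r}
      + card {d. length d = m * n \<and> ballot m n False d \<and> ones d \<le> r}"
    using card_by_first_and_diffs[of "m * n" "\<lambda>x d. ballot m n x d \<and> ones d \<le> r"] by simp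
  also have "\<dots> = (\<Sum>k\<le>r. g k)"
    unfolding card_ones_le_split g_def by (simp add: sum.distrib)
  finally have "a_count n s r = (\<Sum>k\<le>r. g k)" .
  moreover have "n * g k = (2 * n - k) * ((s + 2) * n choose k)" if "k \<le> 2 * n" for k
    using ballot_count[where m = m, OF that] unfolding g_def m_def by simp
  ultimately show ?thesis using sum_counts_closed_form[OF assms] by simp
qed

end
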